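(* Fix an amplification factor $\gamma \geq 1$ and a damping factor $0 \leq \rho < 1$. Let $A:\mathbb{R}^2\to\mathbb{R}^2$ be the linear map $A(u,v) = (u, u+v)$, let $\mathbf{1} = (1,1)$, $\mathbf{c} = (\gamma,1)$, $\mathbf{d} = (1,0)$, and define the piecewise affine map $T:\mathbb{R}^2\to\mathbb{R}^2$ by $$T\mathbf{x} = \begin{cases} A\mathbf{x} + \mathbf{1}, & \text{if } \langle \mathbf{c},\mathbf{x}\rangle \leq -1/2,\\ A\mathbf{x}, & \text{if } |\langle \mathbf{c},\mathbf{x}\rangle| < 1/2,\\ A\mathbf{x} - \mathbf{1}, & \text{if } \langle \mathbf{c},\mathbf{x}\rangle \geq 1/2,\end{cases}$$ and the asymmetrically-damped map $M:\mathbb{R}^2\to\mathbb{R}^2$ by $$M\mathbf{x} = \begin{cases} T(\rho\mathbf{x}), & \text{if } \langle \mathbf{d},\mathbf{x}\rangle \geq 0,\\ T\mathbf{x}, & \text{if } \langle \mathbf{d},\mathbf{x}\rangle < 0.\end{cases}$$ Then the origin is a globally attracting fixed point of $M$: $M\mathbf{0} = \mathbf{0}$, and for every $\mathbf{x}_0 \in \mathbb{R}^2$ the iterates $\mathbf{x}_n = M^n \mathbf{x}_0$ satisfy $\|\mathbf{x}_n\| \to 0$ as $n \to \infty$.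
   Context: $\langle\cdot,\cdot\rangle$ denotes the standard inner product on $\mathbb{R}^2$; points of $\mathbb{R}^2$ are written $\mathbf{x} = (u,v)$. *)

theory Defs
  imports "HOL-Analysis.Analysis"
begin

definition linA :: "real \<times> real \<Rightarrow> real \<times> real" where
  "linA x = (fst x, fst x + snd x)"

definition mapT :: "real \<Rightarrow> real \<times> real \<Rightarrow> real \<times> real" where
  "mapT \<gamma> x =
     (if inner (\<gamma>, 1) x \<le> -1/2 then linA x + (1, 1)
      else if \<bar>inner (\<gamma>, 1) x\<bar> < 1/2 then linA x
      else linA x - (1, 1))"

definition mapM :: "real \<Rightarrow> real \<Rightarrow> real \<times> real \<Rightarrow> real \<times> real" where
  "mapM \<gamma> \<rho> x =
     (if inner (1, 0) x \<ge> (0::real) then mapT \<gamma> (\<rho> *\<^sub>R x) else mapT \<gamma> x)"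

end

theory Submission
  imports Defs
begin

text \<open>
  In the coordinates \<open>u = x\<^sub>1\<close> and \<open>s = \<langle>c, x\<rangle>\<close> the map \<open>T\<close> reads
  \<open>u \<mapsto> u - q(s)\<close>, \<open>s \<mapsto> s + u - (\<gamma> + 1) q(s)\<close> with a quantizer \<open>q(s) \<in> {-1, 0, 1}\<close>,
  and \<open>M\<close> applies it to \<open>(\<rho>u, \<rho>s)\<close> when \<open>u \<ge> 0\<close>.

  Outside an absorbing region the Lyapunov function
  \<open>V = u\<^sup>2/2 + \<bar>s - (\<gamma> + 1/2) u\<bar>\<close> does not increase, and it shrinks by the factor \<open>\<rho>\<close> at
  damped steps with \<open>u < 1\<close> or \<open>\<rho>s \<le> -1/2\<close>. If such steps recur, \<open>V \<rightarrow> 0\<close>, which forces entry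
  into the region; otherwise \<open>u\<close> eventually stays negative, and then one branch of \<open>V\<close>
  (corrected by \<open>u/2\<close>) grows by \<open>1/2\<close> per step while staying below \<open>V\<close>, which is impossible.

  Inside the region, the position of \<open>u\<close> between consecutive quantizer jumps is multiplied
  by \<open>\<rho>\<close> at each damped step and preserved otherwise, and damped steps recur, so it tends
  to \<open>0\<close>. A potential that then drops by \<open>1/8\<close> per step pushes the orbit into a zone where
  the quantizer is silent for ever; there \<open>M = \<rho> A\<close>, and the orbit decays like \<open>n \<rho>\<^sup>n\<close>.
\<close>

lemma descent_reaches:
  fixes f :: "nat \<Rightarrow> real"
  assumes c: "0 < c"
    and step: "\<And>n. m \<le> n \<Longrightarrow> \<not> P n \<Longrightarrow> f (Suc n) \<le> f n - c \<and> B \<le> f n"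
  shows "\<exists>n\<ge>m. P n"
proof (rule ccontr)
  assume none: "\<not> (\<exists>n\<ge>m. P n)"
  have decay: "f (m + j) \<le> f m - real j * c" for j
  proof (induction j)
    case (Suc j)
    then show ?case using step[of "m + j"] none by (auto simp: algebra_simps)
  qed simp
  obtain j where "f m - B < real j * c" using reals_Archimedean3[OF c] by blast
  moreover have "B \<le> f (m + j)" using step[of "m + j"] none by auto
  ultimately show False using decay[of j] by linarith
qed

lemma contracting_tendsto_zero:
  fixes f :: "nat \<Rightarrow> real"
  assumes r: "0 \<le> r" "r < 1"
    and nonneg: "\<And>n. 0 \<le> f n" and noninc: "\<And>n. f (Suc n) \<le> f n"
    and contracts: "\<And>N. \<exists>n\<ge>N. f (Suc n) \<le> r * f n"
  shows "f \<longlonglongrightarrow> 0"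
proof (rule LIMSEQ_I)
  fix \<epsilon> :: real
  assume \<epsilon>: "0 < \<epsilon>"
  have dec: "decseq f" using noninc by (rule decseq_SucI)
  have powers: "\<exists>n. f n \<le> r ^ k * f 0" for k
  proof (induction k)
    case (Suc k)
    then obtain n where n: "f n \<le> r ^ k * f 0" by blast
    obtain n' where n': "n \<le> n'" "f (Suc n') \<le> r * f n'" using contracts by blast
    have "r * f n' \<le> r * (r ^ k * f 0)"
      using decseqD[OF dec n'(1)] n r by (intro mult_left_mono) auto
    then show ?case using n'(2) by (intro exI[of _ "Suc n'"]) simp
  qed auto
  obtain k where k: "r ^ k < \<epsilon> / (f 0 + 1)"
    using real_arch_pow_inv[of "\<epsilon> / (f 0 + 1)" r] \<epsilon> nonneg[of 0] r by auto
  have "r ^ k * f 0 \<le> r ^ k * (f 0 + 1)" using r by (intro mult_left_mono) auto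
  also have "\<dots> < \<epsilon>" using k nonneg[of 0] by (simp add: pos_less_divide_eq)
  finally obtain n where n: "f n < \<epsilon>" using powers[of k] by (meson le_less_trans)
  have "norm (f n' - 0) < \<epsilon>" if "n \<le> n'" for n'
    using decseqD[OF dec that] nonneg[of n'] n by simp
  then show "\<exists>n. \<forall>n'\<ge>n. norm (f n' - 0) < \<epsilon>" by blast
qed

lemma orbit_tendsto_from_iterate:
  assumes "(\<lambda>n. h ((f ^^ n) ((f ^^ N) x))) \<longlonglongrightarrow> L"
  shows "(\<lambda>n. h ((f ^^ n) x)) \<longlonglongrightarrow> L"
proof -
  from assms have "(\<lambda>n. h ((f ^^ (n + N)) x)) \<longlonglongrightarrow> L" by (simp add: funpow_add)
  then show ?thesis by (rule LIMSEQ_offset)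
qed

lemma mult_le_one_less_bound:
  fixes r t c :: real
  assumes "0 \<le> r" "r \<le> 1" "t < c" "0 < c"
  shows "r * t < c"
proof (cases "0 \<le> t")
  case True
  then have "r * t \<le> t" using assms by (simp add: mult_left_le_one_le)
  then show ?thesis using assms by linarith
next
  case False
  then have "r * t \<le> 0" using assms by (simp add: mult_nonneg_nonpos)
  then show ?thesis using assms by linarith
qed

lemma mult_less_one_neg_bound:
  fixes r t c :: real
  assumes "0 \<le> r" "r < 1" "-c \<le> t" "0 < c"
  shows "-c < r * t"
proof -
  have "r * (-c) \<le> r * t" using assms by (intro mult_left_mono) auto
  moreover have "-c < r * (-c)" using assms by simp
  ultimately show ?thesis by linarith
qed

section \<open>The maps in the coordinates \<open>u\<close> and \<open>\<langle>c, x\<rangle>\<close>\<close>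

definition quantizer :: "real \<Rightarrow> real" where
  "quantizer s = (if s \<le> -1/2 then -1 else if \<bar>s\<bar> < 1/2 then 0 else 1)"

lemma quantizer_cases [case_names neg zero pos]:
  obtains "s \<le> -1/2" "quantizer s = -1"
  | "-1/2 < s" "s < 1/2" "quantizer s = 0"
  | "1/2 \<le> s" "quantizer s = 1"
  by (cases "s \<le> -1/2"; cases "s < 1/2") (auto simp: quantizer_def)

lemma quantizer_nonneg: "-1/2 < s \<Longrightarrow> 0 \<le> quantizer s"
  by (simp add: quantizer_def)

definition cdot :: "real \<Rightarrow> real \<times> real \<Rightarrow> real" where
  "cdot g x = g * fst x + snd x"

definition step_u :: "real \<Rightarrow> real \<Rightarrow> real" where
  "step_u u s = u - quantizer s"

definition step_s :: "real \<Rightarrow> real \<Rightarrow> real \<Rightarrow> real" where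
  "step_s g u s = s + u - (g + 1) * quantizer s"

lemma mapT_eq:
  "mapT g x = (fst x - quantizer (cdot g x), fst x + snd x - quantizer (cdot g x))"
  by (cases x) (auto simp: mapT_def linA_def quantizer_def cdot_def)

lemma mapT_coords:
  "fst (mapT g x) = step_u (fst x) (cdot g x)"
  "cdot g (mapT g x) = step_s g (fst x) (cdot g x)"
  by (simp_all add: mapT_eq step_u_def step_s_def cdot_def algebra_simps)

lemma mapM_damped:
  assumes "0 \<le> fst x"
  shows "fst (mapM g r x) = step_u (r * fst x) (r * cdot g x)"
    and "cdot g (mapM g r x) = step_s g (r * fst x) (r * cdot g x)"
proof -
  have "mapM g r x = mapT g (r *\<^sub>R x)" using assms by (cases x) (simp add: mapM_def)
  moreover have "cdot g (r *\<^sub>R x) = r * cdot g x" by (simp add: cdot_def algebra_simps)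
  ultimately show "fst (mapM g r x) = step_u (r * fst x) (r * cdot g x)"
    and "cdot g (mapM g r x) = step_s g (r * fst x) (r * cdot g x)"
    by (simp_all add: mapT_coords)
qed

lemma mapM_undamped:
  assumes "fst x < 0"
  shows "fst (mapM g r x) = step_u (fst x) (cdot g x)"
    and "cdot g (mapM g r x) = step_s g (fst x) (cdot g x)"
proof -
  have "mapM g r x = mapT g x" using assms by (cases x) (simp add: mapM_def)
  then show "fst (mapM g r x) = step_u (fst x) (cdot g x)"
    and "cdot g (mapM g r x) = step_s g (fst x) (cdot g x)"
    by (simp_all add: mapT_coords)
qed

section \<open>The Lyapunov function outside the absorbing region\<close>

definition lyap_plus :: "real \<Rightarrow> real \<Rightarrow> real \<Rightarrow> real" where
  "lyap_plus g u s = u\<^sup>2/2 + s - (g + 1/2) * u"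

definition lyap_minus :: "real \<Rightarrow> real \<Rightarrow> real \<Rightarrow> real" where
  "lyap_minus g u s = u\<^sup>2/2 - s + (g + 1/2) * u"

definition lyapunov :: "real \<Rightarrow> real \<Rightarrow> real \<Rightarrow> real" where
  "lyapunov g u s = max (lyap_plus g u s) (lyap_minus g u s)"

lemma lyap_diff: "lyap_plus g u s - lyap_minus g u s = 2 * s - 2 * (g * u) - u"
  by (simp add: lyap_plus_def lyap_minus_def algebra_simps)

lemma lyap_scale:
  "lyap_plus g (r * u) (r * s) = r * lyap_plus g u s - r * (1 - r) * u\<^sup>2/2"
  "lyap_minus g (r * u) (r * s) = r * lyap_minus g u s - r * (1 - r) * u\<^sup>2/2"
  by (simp_all add: lyap_plus_def lyap_minus_def power2_eq_square field_simps)

lemma lyapunov_ge: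
  "lyap_plus g u s \<le> lyapunov g u s" "lyap_minus g u s \<le> lyapunov g u s"
  by (simp_all add: lyapunov_def)

lemma lyapunov_ge_half_square: "u\<^sup>2/2 \<le> lyapunov g u s"
  using lyapunov_ge[of g u s] by (simp add: lyap_plus_def lyap_minus_def)

lemma lyapunov_nonneg: "0 \<le> lyapunov g u s"
  using lyapunov_ge_half_square[of u g s] zero_le_power2[of u] by linarith

lemma lyap_shift:
  "lyap_plus g (u - q) (s + u - (g + 1) * q) = lyap_plus g u s + (1 - q) * u - q * (1 - q) / 2"
  "lyap_minus g (u - q) (s + u - (g + 1) * q) = lyap_minus g u s - (1 + q) * u + q * (1 + q) / 2"
  by (simp_all add: lyap_plus_def lyap_minus_def power2_eq_square field_simps)

lemma lyapunov_step:
  assumes "quantizer s = q"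
  shows "lyapunov g (step_u u s) (step_s g u s) =
    max (lyap_plus g u s + (1 - q) * u - q * (1 - q) / 2)
        (lyap_minus g u s - (1 + q) * u + q * (1 + q) / 2)"
  using assms by (simp add: lyapunov_def step_u_def step_s_def lyap_shift)

lemma lyap_scaled_le:
  assumes "0 \<le> r" "r \<le> 1"
  shows "lyap_plus g (r * u) (r * s) \<le> r * lyapunov g u s"
    and "lyap_minus g (r * u) (r * s) \<le> r * lyapunov g u s"
    and "r * lyapunov g u s \<le> lyapunov g u s"
proof -
  have "0 \<le> r * (1 - r) * u\<^sup>2/2" using assms by simp
  moreover have "r * lyap_plus g u s \<le> r * lyapunov g u s"
    and "r * lyap_minus g u s \<le> r * lyapunov g u s"
    using lyapunov_ge assms by (simp_all add: mult_left_mono)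
  ultimately show "lyap_plus g (r * u) (r * s) \<le> r * lyapunov g u s"
    and "lyap_minus g (r * u) (r * s) \<le> r * lyapunov g u s"
    by (simp_all add: lyap_scale)
  show "r * lyapunov g u s \<le> lyapunov g u s"
    using assms lyapunov_nonneg[of g u s] by (simp add: mult_left_le_one_le)
qed

text \<open>For \<open>u \<ge> 0\<close> the condition is on the damped value \<open>\<rho> s\<close>, which is what \<open>M\<close> feeds to \<open>T\<close>.\<close>

definition absorbing :: "real \<Rightarrow> real \<Rightarrow> real \<Rightarrow> real \<Rightarrow> bool" where
  "absorbing g r u s \<longleftrightarrow>
     (0 \<le> u \<and> u < 1 \<and> -1/2 < r * s \<and> r * s < g + 1/2) \<or>
     (-1 \<le> u \<and> u < 0 \<and> -g - 1/2 \<le> s \<and> s < 1/2)"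

lemma lyapunov_undamped_le:
  assumes g: "1 \<le> g" and u: "u < 0" and out: "\<not> absorbing g r u s"
  shows "lyapunov g (step_u u s) (step_s g u s) \<le> lyapunov g u s"
proof -
  note diff = lyap_diff[of g u s] and ge = lyapunov_ge[of g u s]
  have gu: "g * u \<le> u" using mult_right_mono_neg[of 1 g u] u g by simp
  show ?thesis
  proof (cases s rule: quantizer_cases)
    case neg
    have "lyap_plus g u s + (2 * u + 1) \<le> lyapunov g u s"
    proof (cases "u \<le> -1/2")
      case True
      then show ?thesis using ge by linarith
    next
      case False
      then have "s < -g - 1/2" using out neg u unfolding absorbing_def by auto
      moreover have "- g / 2 \<le> g * u" using mult_left_mono[of "-1/2" u g] False g by simp
      ultimately show ?thesis using diff ge g u by linarith
    qed
    then show ?thesis using ge by (simp add: lyapunov_step[OF neg(2)])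
  next
    case zero
    then have "u < -1" using out u g unfolding absorbing_def by auto
    then have "lyap_minus g u s - u \<le> lyap_plus g u s + u" using zero diff gu by linarith
    then show ?thesis using ge u by (simp add: lyapunov_step[OF zero(3)])
  next
    case pos
    then have "lyap_minus g u s - (2 * u - 1) \<le> lyap_plus g u s" using diff gu u by linarith
    then show ?thesis using ge by (simp add: lyapunov_step[OF pos(2)])
  qed
qed

lemma lyapunov_damped_contracts:
  assumes r: "0 \<le> r" "r < 1" and g: "1 \<le> g" and u: "0 \<le> u"
    and far: "r * s \<le> -1/2 \<or> (1/2 \<le> r * s \<and> 2 * (g * (r * u)) - r * u \<le> 2 * (r * s) - 1)"
  shows "lyapunov g (step_u (r * u) (r * s)) (step_s g (r * u) (r * s)) \<le> r * lyapunov g u s"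
proof -
  note diff = lyap_diff[of g "r * u" "r * s"]
  note scaled = lyap_scaled_le(1,2)[of r, OF r(1) less_imp_le[OF r(2)]]
  have "r * u \<le> g * (r * u)" using mult_right_mono[of 1 g "r * u"] r g u by simp
  moreover have "0 \<le> r * u" using r u by simp
  ultimately have gru: "0 \<le> 2 * (g * (r * u)) - r * u" by linarith
  show ?thesis
  proof (cases "r * s" rule: quantizer_cases)
    case neg
    then have "lyap_plus g (r * u) (r * s) + (2 * (r * u) + 1) \<le> lyap_minus g (r * u) (r * s)"
      using diff gru by linarith
    then show ?thesis using scaled by (simp add: lyapunov_step[OF neg(2)])
  next
    case zero
    then show ?thesis using far by linarith
  next
    case pos
    then have "lyap_minus g (r * u) (r * s) - (2 * (r * u) - 1) \<le> lyap_plus g (r * u) (r * s)"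
      using diff far by linarith
    then show ?thesis using scaled by (simp add: lyapunov_step[OF pos(2)])
  qed
qed

text \<open>The new upper branch is dominated by the old lower branch if \<open>r\<^sup>2 + 2r \<ge> 1\<close>, and
  otherwise a convex combination of the two old branches dominates it.\<close>

lemma lyap_plus_damped_quiet_dominated:
  assumes r: "0 \<le> r" "r < 1" and g: "1 \<le> g" and u: "1 \<le> u" and s: "r * s < 1/2"
  shows "lyap_plus g (r * u) (r * s) + r * u \<le> lyap_minus g u s
    \<or> lyap_plus g (r * u) (r * s) + r * u \<le> lyap_plus g u s"
proof -
  define A where "A = lyap_minus g u s - (lyap_plus g (r * u) (r * s) + r * u)"
  define B where "B = lyap_plus g u s - (lyap_plus g (r * u) (r * s) + r * u)"
  have "0 \<le> A \<or> 0 \<le> B"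
  proof (cases "1 \<le> r\<^sup>2 + 2 * r")
    case True
    then have "0 < r" using r by (cases "r = 0") auto
    have rA: "r * A = - ((1 + r) * (r * s)) + r * ((g + 1/2) * u) + r * ((g - 1/2) * (r * u))
        + r * ((1 - r\<^sup>2) * u\<^sup>2 / 2)"
      unfolding A_def lyap_plus_def lyap_minus_def by (simp add: field_simps power2_eq_square)
    have "(1 + r) * (r * s) \<le> (1 + r) * (1/2)" using s r by (intro mult_left_mono) auto
    moreover have "r * (3/2) \<le> r * ((g + 1/2) * u)"
      using g u r mult_mono[of "3/2" "g + 1/2" 1 u] by (intro mult_left_mono) auto
    moreover have "r * (r / 2) \<le> r * ((g - 1/2) * (r * u))"
    proof -
      have "r \<le> r * u" using mult_left_mono[of 1 u r] r u by simp
      then have "1/2 * r \<le> (g - 1/2) * (r * u)" using g r by (intro mult_mono) auto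
      then show ?thesis using r by (intro mult_left_mono) auto
    qed
    moreover have "0 \<le> r * ((1 - r\<^sup>2) * u\<^sup>2 / 2)"
      using r by (simp add: power_le_one)
    ultimately have "0 \<le> r * A" using True unfolding rA by (simp add: power2_eq_square)
    then show ?thesis using \<open>0 < r\<close> by (simp add: zero_le_mult_iff)
  next
    case False
    have "(1 - r) * A + (1 + r) * B = u * ((1 - r\<^sup>2) * u - 2 * r)"
      unfolding A_def B_def lyap_plus_def lyap_minus_def by (simp add: field_simps power2_eq_square)
    moreover have "(1 - r\<^sup>2) * 1 \<le> (1 - r\<^sup>2) * u"
      using r u by (intro mult_left_mono) (auto simp: power_le_one)
    ultimately have combined: "0 \<le> (1 - r) * A + (1 + r) * B" using False u by simp
    show ?thesis
    proof (rule ccontr)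
      assume "\<not> (0 \<le> A \<or> 0 \<le> B)"
      then have "(1 - r) * A \<le> 0" "(1 + r) * B < 0"
        using r mult_nonneg_nonpos[of "1 - r" A] mult_pos_neg[of "1 + r" B] by simp_all
      then show False using combined by linarith
    qed
  qed
  then show ?thesis unfolding A_def B_def by linarith
qed

lemma lyapunov_damped_quiet_le:
  assumes r: "0 \<le> r" "r < 1" and g: "1 \<le> g" and u: "1 \<le> u"
    and s: "-1/2 < r * s" "r * s < 1/2"
  shows "lyapunov g (step_u (r * u) (r * s)) (step_s g (r * u) (r * s)) \<le> lyapunov g u s"
proof -
  have q: "quantizer (r * s) = 0" using s by (simp add: quantizer_def)
  have "0 \<le> r * u" using r u by simp
  then have "lyap_minus g (r * u) (r * s) - r * u \<le> lyapunov g u s"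
    using lyap_scaled_le[of r, OF r(1) less_imp_le[OF r(2)], of g u s] by linarith
  moreover have "lyap_plus g (r * u) (r * s) + r * u \<le> lyapunov g u s"
    using lyap_plus_damped_quiet_dominated[OF r g u s(2)] lyapunov_ge[of g u s] by linarith
  ultimately show ?thesis by (simp add: lyapunov_step[OF q])
qed

lemma lyapunov_damped_overshoot_le:
  assumes r: "0 \<le> r" "r < 1" and g: "1 \<le> g" and ru: "1 \<le> r * u"
    and s: "1/2 \<le> r * s" "2 * (r * s) < 1 + 2 * (g * (r * u)) - r * u"
  shows "lyapunov g (step_u (r * u) (r * s)) (step_s g (r * u) (r * s)) \<le> lyapunov g u s"
proof -
  have q: "quantizer (r * s) = 1" using s by (simp add: quantizer_def)
  note scaled = lyap_scaled_le[of r, OF r(1) less_imp_le[OF r(2)], of g u s]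
  have "0 < r" using ru r by (cases "r = 0") auto
  define A where "A = lyap_minus g u s - (lyap_minus g (r * u) (r * s) - 2 * (r * u) + 1)"
  have rA: "r * A = (1 - r) * (1/2 + (g - 1/2) * (r * u) - r * s) + (1 + r) * (r * u) - 1/2 - r/2
      + r * (1 - r\<^sup>2) * u\<^sup>2 / 2"
    unfolding A_def lyap_minus_def by (simp add: field_simps power2_eq_square)
  have "0 \<le> (1 - r) * (1/2 + (g - 1/2) * (r * u) - r * s)"
    using r s by (intro mult_nonneg_nonneg) (auto simp: algebra_simps)
  moreover have "1 + r \<le> (1 + r) * (r * u)" using mult_left_mono[of 1 "r * u" "1 + r"] ru r by simp
  moreover have "0 \<le> r * (1 - r\<^sup>2) * u\<^sup>2 / 2" using r by (simp add: power_le_one)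
  ultimately have "0 < r * A" unfolding rA using r by linarith
  then have "0 < A" using \<open>0 < r\<close> by (simp add: zero_less_mult_iff)
  then show ?thesis using scaled lyapunov_ge[of g u s] unfolding A_def
    by (simp add: lyapunov_step[OF q])
qed

lemma lyapunov_damped_le:
  assumes r: "0 \<le> r" "r < 1" and g: "1 \<le> g" and u: "0 \<le> u"
    and out: "\<not> absorbing g r u s"
    and out': "\<not> absorbing g r (step_u (r * u) (r * s)) (step_s g (r * u) (r * s))"
  shows "lyapunov g (step_u (r * u) (r * s)) (step_s g (r * u) (r * s)) \<le> lyapunov g u s"
proof -
  have contracted: "r * lyapunov g u s \<le> lyapunov g u s"
    using lyap_scaled_le(3) r by simp
  consider "r * s \<le> -1/2" | "-1/2 < r * s" "r * s < 1/2" | "1/2 \<le> r * s" by linarith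
  then show ?thesis
  proof cases
    case 1
    then show ?thesis using lyapunov_damped_contracts[OF r g u] contracted by fastforce
  next
    case 2
    then have "1 \<le> u" using out u g unfolding absorbing_def by auto
    then show ?thesis using lyapunov_damped_quiet_le[OF r g] 2 by blast
  next
    case 3
    consider "2 * (g * (r * u)) - r * u \<le> 2 * (r * s) - 1"
      | "2 * (r * s) - 1 < 2 * (g * (r * u)) - r * u" "1 \<le> r * u"
      | "2 * (r * s) - 1 < 2 * (g * (r * u)) - r * u" "r * u < 1" by linarith
    then show ?thesis
    proof cases
      case 1
      then show ?thesis using lyapunov_damped_contracts[OF r g u] 3 contracted by fastforce
    next
      case 2
      then show ?thesis using lyapunov_damped_overshoot_le[OF r g _ 3] by simp
    next
      case 3
      have "g * (r * u) \<le> g" using g \<open>r * u < 1\<close> by (simp add: mult_left_le)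
      moreover have "0 \<le> r * u" using r u by simp
      ultimately have "absorbing g r (step_u (r * u) (r * s)) (step_s g (r * u) (r * s))"
        using 3 \<open>1/2 \<le> r * s\<close> unfolding absorbing_def step_u_def step_s_def quantizer_def
        by (auto simp: algebra_simps)
      then show ?thesis using out' by simp
    qed
  qed
qed

lemma lyapunov_damped_contracts_outside:
  assumes r: "0 \<le> r" "r < 1" and g: "1 \<le> g" and u: "0 \<le> u"
    and near: "r * s \<le> -1/2 \<or> u < 1" and out: "\<not> absorbing g r u s"
  shows "lyapunov g (step_u (r * u) (r * s)) (step_s g (r * u) (r * s)) \<le> r * lyapunov g u s"
proof (cases "r * s \<le> -1/2")
  case False
  then have "u < 1" "g + 1/2 \<le> r * s" using near out u unfolding absorbing_def by auto
  moreover have "r * u \<le> 1" using mult_left_le_one_le[of u r] r u \<open>u < 1\<close> by linarith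
  then have "g * (r * u) \<le> g" using g by (simp add: mult_left_le)
  moreover have "0 \<le> r * u" using r u by simp
  ultimately have "1/2 \<le> r * s \<and> 2 * (g * (r * u)) - r * u \<le> 2 * (r * s) - 1" using g by linarith
  then show ?thesis using lyapunov_damped_contracts[OF r g u] by blast
qed (use lyapunov_damped_contracts[OF r g u] in simp)

lemma lyap_minus_undamped_increases:
  assumes g: "1 \<le> g" and u: "u < 0" and out: "\<not> absorbing g r u s"
  shows "lyap_minus g u s + u/2 + 1/2 \<le> lyap_minus g (step_u u s) (step_s g u s) + step_u u s / 2"
proof -
  note shift = lyap_shift(2)[of g u "quantizer s" s]
  show ?thesis
  proof (cases s rule: quantizer_cases)
    case neg
    then show ?thesis using shift by (simp add: step_u_def step_s_def)
  next
    case zero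
    then have "u < -1" using out u g unfolding absorbing_def by auto
    then show ?thesis using zero shift by (simp add: step_u_def step_s_def)
  next
    case pos
    then have "lyap_minus g (step_u u s) (step_s g u s) = lyap_minus g u s - 2 * u + 1"
      using shift by (simp add: step_u_def step_s_def)
    then show ?thesis using pos u by (simp add: step_u_def field_simps)
  qed
qed

definition lyap_threshold :: "real \<Rightarrow> real" where
  "lyap_threshold g = min (1/4) ((1 / (4 * g + 2))\<^sup>2 / 2)"

lemma absorbing_if_lyapunov_small:
  assumes r: "0 \<le> r" "r < 1" and g: "1 \<le> g" and V: "lyapunov g u s < lyap_threshold g"
  shows "absorbing g r u s"
proof -
  define e where "e = 1 / (4 * g + 2)"
  have e: "0 < e" "e < 1" "(g + 1/2) * e = 1/4" using g unfolding e_def by (simp_all add: field_simps)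
  have V': "lyapunov g u s < 1/4" "lyapunov g u s < e\<^sup>2/2"
    using V unfolding lyap_threshold_def e_def by auto
  then have "\<bar>u\<bar>\<^sup>2 < e\<^sup>2" using lyapunov_ge_half_square[of u g s] by simp
  then have ue: "\<bar>u\<bar> < e" using e power2_less_imp_less[of "\<bar>u\<bar>" e] by simp
  have gpos: "0 \<le> g + 1/2" using g by simp
  have "(g + 1/2) * \<bar>u\<bar> \<le> (g + 1/2) * e" using mult_left_mono[OF less_imp_le[OF ue] gpos] .
  moreover have "(g + 1/2) * u \<le> (g + 1/2) * \<bar>u\<bar>" using mult_left_mono[OF abs_ge_self gpos] .
  moreover have "- ((g + 1/2) * u) \<le> (g + 1/2) * \<bar>u\<bar>"
    using mult_left_mono[OF abs_ge_minus_self gpos] by simp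
  moreover have "0 \<le> u\<^sup>2/2" by simp
  moreover note lyapunov_ge[of g u s]
  ultimately have s: "-1/2 < s" "s < 1/2"
    using V'(1) e(3) unfolding lyap_plus_def lyap_minus_def by linarith+
  then have "-1/2 < r * s" "r * s < 1/2"
    using mult_less_one_neg_bound[OF r, of "1/2" s] mult_le_one_less_bound[of r s "1/2"] r by simp_all
  then show ?thesis using s ue e g unfolding absorbing_def by auto
qed

section \<open>Dynamics in the absorbing region\<close>

lemma absorbing_undamped_step:
  assumes r: "0 \<le> r" "r < 1" and g: "1 \<le> g" and u: "u < 0" and I: "absorbing g r u s"
  shows "absorbing g r (step_u u s) (step_s g u s)"
proof -
  have u1: "-1 \<le> u" and s: "-g - 1/2 \<le> s" "s < 1/2" using I u unfolding absorbing_def by auto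
  show ?thesis
  proof (cases s rule: quantizer_cases)
    case neg
    have "-1/2 < r * (s + u + g + 1)" using mult_less_one_neg_bound[OF r, of "1/2"] s u1 by simp
    moreover have "r * (s + u + g + 1) < g + 1/2"
      using mult_le_one_less_bound[of r "s + u + g + 1" "g + 1/2"] r u neg g by simp
    ultimately show ?thesis using neg u u1 unfolding absorbing_def step_u_def step_s_def
      by (simp add: algebra_simps)
  next
    case zero
    then show ?thesis using u u1 s g unfolding absorbing_def step_u_def step_s_def by simp
  next
    case pos
    then show ?thesis using s by simp
  qed
qed

lemma absorbing_damped_step:
  assumes r: "0 \<le> r" "r < 1" and g: "1 \<le> g" and u: "0 \<le> u" and I: "absorbing g r u s"
  shows "absorbing g r (step_u (r * u) (r * s)) (step_s g (r * u) (r * s))"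
proof -
  have u1: "u < 1" and s: "-1/2 < r * s" "r * s < g + 1/2" using I u unfolding absorbing_def by auto
  have ru: "r * u \<le> u" "0 \<le> r * u" using mult_left_le_one_le[of u r] r u by auto
  show ?thesis
  proof (cases "r * s" rule: quantizer_cases)
    case zero
    have "-1/2 < r * (r * s + r * u)" using mult_less_one_neg_bound[OF r, of "1/2"] s ru by simp
    moreover have "r * (r * s + r * u) < g + 1/2"
      using mult_le_one_less_bound[of r "r * s + r * u" "g + 1/2"] r ru zero s u1 g by simp
    ultimately show ?thesis using zero ru u1 unfolding absorbing_def step_u_def step_s_def by simp
  next
    case pos
    then show ?thesis using ru u1 s unfolding absorbing_def step_u_def step_s_def by simp
  qed (use s in simp)
qed

definition wrap :: "real \<Rightarrow> real" where
  "wrap u = (if 0 \<le> u then u else u + 1)"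

lemma absorbing_wrap_bounds: "absorbing g r u s \<Longrightarrow> 0 \<le> wrap u \<and> wrap u < 1"
  unfolding absorbing_def wrap_def by auto

lemma wrap_undamped_step:
  assumes u: "u < 0" and I: "absorbing g r u s"
  shows "wrap (step_u u s) = wrap u"
  using I u by (cases s rule: quantizer_cases) (auto simp: absorbing_def wrap_def step_u_def)

lemma wrap_damped_step:
  assumes r: "0 \<le> r" "r < 1" and u: "0 \<le> u" and I: "absorbing g r u s"
  shows "wrap (step_u (r * u) (r * s)) = r * wrap u"
proof -
  have "r * u \<le> u" "0 \<le> r * u" using mult_left_le_one_le[of u r] r u by auto
  then show ?thesis using I u
    by (cases "r * s" rule: quantizer_cases) (auto simp: absorbing_def wrap_def step_u_def)
qed

definition zone_potential :: "real \<Rightarrow> real \<Rightarrow> real \<Rightarrow> real \<Rightarrow> real" where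
  "zone_potential g r u s = (if 0 \<le> u then r * s else s + g + 3/4)"

lemma absorbing_zone_potential_gt: "absorbing g r u s \<Longrightarrow> -1/2 < zone_potential g r u s"
  unfolding absorbing_def zone_potential_def by auto

lemma zone_potential_damped_drop:
  assumes r: "0 \<le> r" "r < 1" and u: "0 \<le> u" "u \<le> 1/8" and s: "1/2 \<le> r * s"
  shows "zone_potential g r (step_u (r * u) (r * s)) (step_s g (r * u) (r * s))
    \<le> zone_potential g r u s - 1/8"
proof -
  have "r * u \<le> u" using mult_left_le_one_le[of u r] r u by auto
  then show ?thesis using s u
    by (cases "r * s" rule: quantizer_cases) (auto simp: zone_potential_def step_u_def step_s_def)
qed

lemma zone_potential_undamped_drop:
  assumes r: "0 \<le> r" "r < 1" and g: "1 \<le> g" and u: "u < 0" "u + 1 \<le> 1/8"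
    and I: "absorbing g r u s"
  shows "zone_potential g r (step_u u s) (step_s g u s) \<le> zone_potential g r u s - 1/8"
proof -
  have s: "-g - 1/2 \<le> s" "s < 1/2" and u1: "-1 \<le> u" using I u unfolding absorbing_def by auto
  have before: "zone_potential g r u s = s + g + 3/4" using u by (simp add: zone_potential_def)
  show ?thesis
  proof (cases s rule: quantizer_cases)
    case neg
    then have "step_u u s = u + 1" "step_s g u s = s + u + g + 1"
      by (simp_all add: step_u_def step_s_def)
    then have after: "zone_potential g r (step_u u s) (step_s g u s) = r * (s + u + g + 1)"
      using u1 by (simp add: zone_potential_def)
    have "r * (s + u + g + 1) \<le> s + g + 5/8"
    proof (cases "0 \<le> s + u + g + 1")
      case True
      then have "r * (s + u + g + 1) \<le> s + u + g + 1"
        using mult_left_le_one_le[of "s + u + g + 1" r] r by linarith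
      then show ?thesis using u by linarith
    next
      case False
      then have "r * (s + u + g + 1) \<le> 0" using mult_nonneg_nonpos[of r "s + u + g + 1"] r by linarith
      then show ?thesis using s by linarith
    qed
    then show ?thesis using before after by linarith
  next
    case zero
    then have "step_u u s = u" "step_s g u s = s + u" by (simp_all add: step_u_def step_s_def)
    then show ?thesis using before u by (simp add: zone_potential_def)
  next
    case pos
    then show ?thesis using s by linarith
  qed
qed

text \<open>The quantizer stays silent from here on, so that \<open>M\<close> acts as the linear map \<open>\<rho> A\<close>.\<close>

definition linear_zone :: "real \<Rightarrow> real \<Rightarrow> real \<Rightarrow> bool" where
  "linear_zone r u s \<longleftrightarrow> 0 \<le> u \<and> u \<le> (1 - r)/2 \<and> -1/2 < r * s \<and> r * s < 1/2"

lemma linear_zone_step: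
  assumes r: "0 \<le> r" "r < 1" and L: "linear_zone r u s"
  shows "linear_zone r (r * u) (r * s + r * u)"
proof -
  have u: "0 \<le> u" "u \<le> (1 - r)/2" and s: "-1/2 < r * s" "r * s < 1/2"
    using L unfolding linear_zone_def by auto
  have ru: "r * u \<le> u" "0 \<le> r * u" using mult_left_le_one_le[of u r] r u by auto
  have "-1/2 < r * (r * s + r * u)" using mult_less_one_neg_bound[OF r, of "1/2"] s ru by simp
  moreover have "r * (r * s + r * u) < 1/2"
  proof -
    have "r * (r * s + r * u) \<le> r * (1 - r/2)" using r s ru u by (intro mult_left_mono) auto
    moreover have "r * (1 - r/2) < 1/2"
    proof -
      have "0 < (1 - r)\<^sup>2" using r by simp
      moreover have "(1 - r)\<^sup>2 = 1 - 2 * r + r * r" "r * (1 - r/2) = r - r * r / 2"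
        by (simp_all add: power2_eq_square algebra_simps)
      ultimately show ?thesis by linarith
    qed
    ultimately show ?thesis by linarith
  qed
  ultimately show ?thesis using ru u unfolding linear_zone_def by simp
qed

lemma absorbing_mapM:
  assumes r: "0 \<le> r" "r < 1" and g: "1 \<le> g" and I: "absorbing g r (fst x) (cdot g x)"
  shows "absorbing g r (fst (mapM g r x)) (cdot g (mapM g r x))"
proof (cases "0 \<le> fst x")
  case True
  then show ?thesis using absorbing_damped_step[OF r g True I] by (simp add: mapM_damped)
next
  case False
  then show ?thesis using absorbing_undamped_step[OF r g _ I] by (simp add: mapM_undamped)
qed

lemma absorbing_funpow:
  assumes r: "0 \<le> r" "r < 1" and g: "1 \<le> g" and I: "absorbing g r (fst x) (cdot g x)"
  shows "absorbing g r (fst ((mapM g r ^^ n) x)) (cdot g ((mapM g r ^^ n) x))"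
  by (induction n) (simp_all add: I absorbing_mapM[OF r g])

lemma wrap_mapM:
  assumes r: "0 \<le> r" "r < 1" and I: "absorbing g r (fst x) (cdot g x)"
  shows "wrap (fst (mapM g r x)) = (if 0 \<le> fst x then r else 1) * wrap (fst x)"
proof (cases "0 \<le> fst x")
  case True
  then show ?thesis using wrap_damped_step[OF r True I] by (simp add: mapM_damped)
next
  case False
  then show ?thesis using wrap_undamped_step[OF _ I] by (simp add: mapM_undamped)
qed

text \<open>While \<open>u < 0\<close> stays fixed, \<open>s\<close> decreases by \<open>-u\<close> per step and is bounded below by
  \<open>-\<gamma> - 1/2\<close>, so within \<open>k\<close> steps the quantizer fires and \<open>u\<close> jumps to \<open>u + 1 \<ge> 0\<close>.\<close>

lemma undamped_run_ends:
  assumes r: "0 \<le> r" "r < 1" and g: "1 \<le> g" and I: "absorbing g r (fst x) (cdot g x)"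
    and u: "fst x < 0" and s: "cdot g x < -g - 1/2 + real k * (- fst x)"
  shows "\<exists>j. 0 \<le> fst ((mapM g r ^^ j) x)"
  using I u s
proof (induction k arbitrary: x)
  case 0
  then show ?case by (simp add: absorbing_def)
next
  case (Suc k)
  show ?case
  proof (cases "cdot g x \<le> -1/2")
    case True
    then have "0 \<le> fst (mapM g r x)"
      using Suc.prems by (simp add: mapM_undamped step_u_def quantizer_def absorbing_def)
    then show ?thesis by (intro exI[of _ 1]) simp
  next
    case False
    then have "quantizer (cdot g x) = 0"
      using Suc.prems by (cases "cdot g x" rule: quantizer_cases) (auto simp: absorbing_def)
    then have "fst (mapM g r x) = fst x" "cdot g (mapM g r x) = cdot g x + fst x"
      using Suc.prems(2) by (simp_all add: mapM_undamped step_u_def step_s_def)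
    then obtain j where "0 \<le> fst ((mapM g r ^^ j) (mapM g r x))"
      using Suc.IH[of "mapM g r x"] absorbing_mapM[OF r g Suc.prems(1)] Suc.prems(2,3)
      by (auto simp: algebra_simps)
    then show ?thesis by (metis funpow_Suc_right comp_apply)
  qed
qed

lemma absorbing_reaches_damped:
  assumes r: "0 \<le> r" "r < 1" and g: "1 \<le> g" and I: "absorbing g r (fst x) (cdot g x)"
  shows "\<exists>j. 0 \<le> fst ((mapM g r ^^ j) x)"
proof (cases "0 \<le> fst x")
  case True
  then show ?thesis by (intro exI[of _ 0]) simp
next
  case False
  then have u: "fst x < 0" by simp
  obtain k where "cdot g x + g + 1/2 < real k * (- fst x)"
    using reals_Archimedean3[of "- fst x"] u by auto
  then have "cdot g x < -g - 1/2 + real k * (- fst x)" by linarith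
  from undamped_run_ends[OF r g I u this] show ?thesis .
qed

lemma wrap_tendsto_zero:
  assumes r: "0 \<le> r" "r < 1" and g: "1 \<le> g" and I: "absorbing g r (fst x) (cdot g x)"
  shows "(\<lambda>n. wrap (fst ((mapM g r ^^ n) x))) \<longlonglongrightarrow> 0"
proof (rule contracting_tendsto_zero[OF r])
  note I' = absorbing_funpow[OF r g I]
  fix n
  show "0 \<le> wrap (fst ((mapM g r ^^ n) x))" using absorbing_wrap_bounds[OF I'] by blast
  show "wrap (fst ((mapM g r ^^ Suc n) x)) \<le> wrap (fst ((mapM g r ^^ n) x))"
    using wrap_mapM[OF r I'] absorbing_wrap_bounds[OF I'[of n]] mult_left_le_one_le[of _ r] r
    by simp
next
  note I' = absorbing_funpow[OF r g I]
  fix N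
  obtain j where "0 \<le> fst ((mapM g r ^^ j) ((mapM g r ^^ N) x))"
    using absorbing_reaches_damped[OF r g I'] by blast
  then have "0 \<le> fst ((mapM g r ^^ (j + N)) x)" by (simp add: funpow_add)
  then show "\<exists>n\<ge>N. wrap (fst ((mapM g r ^^ Suc n) x)) \<le> r * wrap (fst ((mapM g r ^^ n) x))"
    using wrap_mapM[OF r I'] by (intro exI[of _ "j + N"]) simp
qed

lemma linear_zone_mapM:
  assumes r: "0 \<le> r" "r < 1" and L: "linear_zone r (fst x) (cdot g x)"
  shows "mapM g r x = (r * fst x, r * (fst x + snd x))"
    and "linear_zone r (fst (mapM g r x)) (cdot g (mapM g r x))"
proof -
  have "0 \<le> fst x" "quantizer (r * cdot g x) = 0"
    using L by (auto simp: linear_zone_def quantizer_def)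
  then show M: "mapM g r x = (r * fst x, r * (fst x + snd x))"
    by (cases x) (simp add: mapM_def mapT_eq cdot_def algebra_simps)
  have "cdot g (r * fst x, r * (fst x + snd x)) = r * cdot g x + r * fst x"
    by (simp add: cdot_def algebra_simps)
  then show "linear_zone r (fst (mapM g r x)) (cdot g (mapM g r x))"
    using linear_zone_step[OF r L] by (simp add: M)
qed

lemma linear_zone_tendsto_zero:
  assumes r: "0 \<le> r" "r < 1" and L: "linear_zone r (fst x) (cdot g x)"
  shows "(\<lambda>n. norm ((mapM g r ^^ n) x)) \<longlonglongrightarrow> 0"
proof -
  have orbit: "linear_zone r (fst ((mapM g r ^^ n) x)) (cdot g ((mapM g r ^^ n) x)) \<and>
      (mapM g r ^^ n) x = (r ^ n * fst x, r ^ n * snd x + (real n * r ^ n) * fst x)" for n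
  proof (induction n)
    case (Suc n)
    then have L: "linear_zone r (fst ((mapM g r ^^ n) x)) (cdot g ((mapM g r ^^ n) x))"
      and E: "(mapM g r ^^ n) x = (r ^ n * fst x, r ^ n * snd x + (real n * r ^ n) * fst x)"
      by auto
    show ?case using linear_zone_mapM[OF r L] E by (simp add: algebra_simps)
  qed (use L in simp)
  have "(\<lambda>n. real n * r ^ n) \<longlonglongrightarrow> 0" using r powser_times_n_limit_0[of r] by simp
  then have "(\<lambda>n. (r ^ n * fst x, r ^ n * snd x + (real n * r ^ n) * fst x))
      \<longlonglongrightarrow> (0 * fst x, 0 * snd x + 0 * fst x)"
    using r by (intro tendsto_intros) auto
  then have "(\<lambda>n. (mapM g r ^^ n) x) \<longlonglongrightarrow> 0" using orbit by (simp add: zero_prod_def)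
  then show ?thesis by (rule tendsto_norm_zero)
qed

lemma zone_potential_mapM_drop:
  assumes r: "0 \<le> r" "r < 1" and g: "1 \<le> g" and I: "absorbing g r (fst x) (cdot g x)"
    and w: "wrap (fst x) \<le> 1/8" "wrap (fst x) \<le> (1 - r)/2"
    and out: "\<not> linear_zone r (fst x) (cdot g x)"
  shows "zone_potential g r (fst (mapM g r x)) (cdot g (mapM g r x))
    \<le> zone_potential g r (fst x) (cdot g x) - 1/8"
proof (cases "0 \<le> fst x")
  case True
  then have "1/2 \<le> r * cdot g x"
    using out I w unfolding linear_zone_def absorbing_def wrap_def by auto
  then show ?thesis using zone_potential_damped_drop[OF r True] w True
    by (simp add: mapM_damped wrap_def)
next
  case False
  then show ?thesis using zone_potential_undamped_drop[OF r g _ _ I] w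
    by (simp add: mapM_undamped wrap_def)
qed

lemma absorbing_reaches_linear_zone:
  assumes r: "0 \<le> r" "r < 1" and g: "1 \<le> g" and I: "absorbing g r (fst x) (cdot g x)"
  shows "\<exists>n. linear_zone r (fst ((mapM g r ^^ n) x)) (cdot g ((mapM g r ^^ n) x))"
proof -
  define X where "X n = (mapM g r ^^ n) x" for n
  have I': "absorbing g r (fst (X n)) (cdot g (X n))" for n
    unfolding X_def by (rule absorbing_funpow[OF r g I])
  have "0 < min (1/8) ((1 - r)/2)" using r by simp
  then obtain n0 where n0: "\<And>n. n0 \<le> n \<Longrightarrow> wrap (fst (X n)) < min (1/8) ((1 - r)/2)"
    using order_tendstoD(2)[OF wrap_tendsto_zero[OF r g I]]
    unfolding eventually_sequentially X_def by blast
  have "\<exists>n\<ge>n0. linear_zone r (fst (X n)) (cdot g (X n))"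
  proof (rule descent_reaches[where c = "1/8" and B = "-1/2"
        and f = "\<lambda>n. zone_potential g r (fst (X n)) (cdot g (X n))"])
    fix n
    assume "n0 \<le> n" and out: "\<not> linear_zone r (fst (X n)) (cdot g (X n))"
    then have "wrap (fst (X n)) \<le> 1/8" "wrap (fst (X n)) \<le> (1 - r)/2" using n0 by force+
    moreover have "X (Suc n) = mapM g r (X n)" by (simp add: X_def)
    ultimately show "zone_potential g r (fst (X (Suc n))) (cdot g (X (Suc n)))
        \<le> zone_potential g r (fst (X n)) (cdot g (X n)) - 1/8 \<and>
      -1/2 \<le> zone_potential g r (fst (X n)) (cdot g (X n))"
      using zone_potential_mapM_drop[OF r g I'[of n] _ _ out] absorbing_zone_potential_gt[OF I'[of n]]
      by simp
  qed simp
  then show ?thesis unfolding X_def by blast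
qed

lemma absorbing_tendsto_zero:
  assumes r: "0 \<le> r" "r < 1" and g: "1 \<le> g" and I: "absorbing g r (fst x) (cdot g x)"
  shows "(\<lambda>n. norm ((mapM g r ^^ n) x)) \<longlonglongrightarrow> 0"
proof -
  obtain N where "linear_zone r (fst ((mapM g r ^^ N) x)) (cdot g ((mapM g r ^^ N) x))"
    using absorbing_reaches_linear_zone[OF r g I] by blast
  then show ?thesis by (rule orbit_tendsto_from_iterate[OF linear_zone_tendsto_zero[OF r]])
qed

section \<open>Every orbit enters the absorbing region\<close>

definition lyap_contracting :: "real \<Rightarrow> real \<Rightarrow> real \<times> real \<Rightarrow> bool" where
  "lyap_contracting g r x \<longleftrightarrow> 0 \<le> fst x \<and> (r * cdot g x \<le> -1/2 \<or> fst x < 1)"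

lemma lyapunov_mapM_le:
  assumes r: "0 \<le> r" "r < 1" and g: "1 \<le> g"
    and out: "\<not> absorbing g r (fst x) (cdot g x)"
    and out': "\<not> absorbing g r (fst (mapM g r x)) (cdot g (mapM g r x))"
  shows "lyapunov g (fst (mapM g r x)) (cdot g (mapM g r x)) \<le> lyapunov g (fst x) (cdot g x)"
proof (cases "0 \<le> fst x")
  case True
  then show ?thesis using lyapunov_damped_le[OF r g True out] out' by (simp add: mapM_damped)
next
  case False
  then show ?thesis using lyapunov_undamped_le[OF g _ out] by (simp add: mapM_undamped)
qed

lemma lyapunov_mapM_contracts:
  assumes r: "0 \<le> r" "r < 1" and g: "1 \<le> g"
    and C: "lyap_contracting g r x" and out: "\<not> absorbing g r (fst x) (cdot g x)"
  shows "lyapunov g (fst (mapM g r x)) (cdot g (mapM g r x)) \<le> r * lyapunov g (fst x) (cdot g x)"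
  using C lyapunov_damped_contracts_outside[OF r g _ _ out]
  by (simp add: lyap_contracting_def mapM_damped)

lemma lyapunov_orbit_decseq:
  assumes r: "0 \<le> r" "r < 1" and g: "1 \<le> g"
    and out: "\<And>n. \<not> absorbing g r (fst ((mapM g r ^^ n) x)) (cdot g ((mapM g r ^^ n) x))"
  shows "decseq (\<lambda>n. lyapunov g (fst ((mapM g r ^^ n) x)) (cdot g ((mapM g r ^^ n) x)))"
proof (rule decseq_SucI)
  fix n
  show "lyapunov g (fst ((mapM g r ^^ Suc n) x)) (cdot g ((mapM g r ^^ Suc n) x))
      \<le> lyapunov g (fst ((mapM g r ^^ n) x)) (cdot g ((mapM g r ^^ n) x))"
    using lyapunov_mapM_le[OF r g out[of n]] out[of "Suc n"] by simp
qed

lemma calm_orbit_turns_negative: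
  assumes r: "0 \<le> r" "r < 1"
    and calm: "\<And>n. N \<le> n \<Longrightarrow> \<not> lyap_contracting g r ((mapM g r ^^ n) x)"
  shows "\<exists>m\<ge>N. fst ((mapM g r ^^ m) x) < 0"
proof (rule descent_reaches[where c = "1 - r" and B = 1 and f = "\<lambda>n. fst ((mapM g r ^^ n) x)"])
  fix n
  let ?y = "(mapM g r ^^ n) x"
  assume "N \<le> n" and "\<not> fst ?y < 0"
  then have u: "1 \<le> fst ?y" and s: "-1/2 < r * cdot g ?y"
    using calm[OF \<open>N \<le> n\<close>] unfolding lyap_contracting_def by auto
  from s have "0 \<le> quantizer (r * cdot g ?y)" by (rule quantizer_nonneg)
  then have "fst ((mapM g r ^^ Suc n) x) \<le> r * fst ?y"
    using u by (simp add: mapM_damped step_u_def)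
  moreover have "(1 - r) * 1 \<le> (1 - r) * fst ?y" using u r by (intro mult_left_mono) auto
  ultimately show "fst ((mapM g r ^^ Suc n) x) \<le> fst ?y - (1 - r) \<and> 1 \<le> fst ?y"
    using u by (simp add: algebra_simps)
qed (use r in simp)

lemma calm_orbit_stays_negative:
  assumes calm: "\<And>n. N \<le> n \<Longrightarrow> \<not> lyap_contracting g r ((mapM g r ^^ n) x)"
    and m: "N \<le> m" "fst ((mapM g r ^^ m) x) < 0" and "m \<le> n"
  shows "fst ((mapM g r ^^ n) x) < 0"
  using \<open>m \<le> n\<close>
proof (induction rule: dec_induct)
  case (step n)
  let ?y = "(mapM g r ^^ n) x"
  have "N \<le> Suc n" using m step.hyps by simp
  show ?case
  proof (cases "cdot g ?y \<le> -1/2")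
    case True
    then have "fst ((mapM g r ^^ Suc n) x) = fst ?y + 1"
      using step.IH by (simp add: mapM_undamped step_u_def quantizer_def)
    then show ?thesis using calm[OF \<open>N \<le> Suc n\<close>] step.IH
      unfolding lyap_contracting_def by auto
  next
    case False
    then have "0 \<le> quantizer (cdot g ?y)" by (intro quantizer_nonneg) simp
    then show ?thesis using step.IH by (simp add: mapM_undamped step_u_def)
  qed
qed (use m in simp)

lemma outside_orbit_frequently_contracting:
  assumes r: "0 \<le> r" "r < 1" and g: "1 \<le> g"
    and out: "\<And>n. \<not> absorbing g r (fst ((mapM g r ^^ n) x)) (cdot g ((mapM g r ^^ n) x))"
  shows "\<exists>n\<ge>N. lyap_contracting g r ((mapM g r ^^ n) x)"
proof (rule ccontr)
  define X where "X n = (mapM g r ^^ n) x" for n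
  define V where "V n = lyapunov g (fst (X n)) (cdot g (X n))" for n
  assume "\<not> (\<exists>n\<ge>N. lyap_contracting g r ((mapM g r ^^ n) x))"
  then have calm: "\<And>n. N \<le> n \<Longrightarrow> \<not> lyap_contracting g r ((mapM g r ^^ n) x)" by blast
  obtain m where m: "N \<le> m" "fst (X m) < 0"
    using calm_orbit_turns_negative[OF r calm] unfolding X_def by blast
  have neg: "fst (X n) < 0" if "m \<le> n" for n
    using calm_orbit_stays_negative[OF calm m[unfolded X_def] that] unfolding X_def .
  have "decseq V" using lyapunov_orbit_decseq[OF r g out] unfolding V_def X_def .
  txt \<open>From time \<open>m\<close> on, \<open>lyap_minus + u/2\<close> grows by \<open>1/2\<close> per step but stays below \<open>V 0\<close>.\<close>
  have "\<exists>n\<ge>m. False"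
  proof (rule descent_reaches[where c = "1/2" and B = "- V 0"
        and f = "\<lambda>n. - lyap_minus g (fst (X n)) (cdot g (X n)) - fst (X n) / 2"])
    fix n
    assume "m \<le> n"
    note un = neg[OF this]
    have "V n \<le> V 0" using decseqD[OF \<open>decseq V\<close>, of 0 n] by simp
    then have bound: "lyap_minus g (fst (X n)) (cdot g (X n)) \<le> V 0"
      using lyapunov_ge(2)[of g "fst (X n)" "cdot g (X n)"] unfolding V_def by linarith
    have "X (Suc n) = mapM g r (X n)" by (simp add: X_def)
    then have "lyap_minus g (fst (X n)) (cdot g (X n)) + fst (X n) / 2 + 1/2
        \<le> lyap_minus g (fst (X (Suc n))) (cdot g (X (Suc n))) + fst (X (Suc n)) / 2"
      using lyap_minus_undamped_increases[OF g un out[of n, folded X_def]]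
      by (simp only: mapM_undamped[OF un])
    then show "- lyap_minus g (fst (X (Suc n))) (cdot g (X (Suc n))) - fst (X (Suc n)) / 2
        \<le> - lyap_minus g (fst (X n)) (cdot g (X n)) - fst (X n) / 2 - 1/2 \<and>
      - V 0 \<le> - lyap_minus g (fst (X n)) (cdot g (X n)) - fst (X n) / 2"
      using bound un by linarith
  qed simp
  then show False by blast
qed

lemma reaches_absorbing:
  assumes r: "0 \<le> r" "r < 1" and g: "1 \<le> g"
  shows "\<exists>n. absorbing g r (fst ((mapM g r ^^ n) x)) (cdot g ((mapM g r ^^ n) x))"
proof (rule ccontr)
  define V where "V n = lyapunov g (fst ((mapM g r ^^ n) x)) (cdot g ((mapM g r ^^ n) x))" for n
  assume "\<not> ?thesis"
  then have out: "\<And>n. \<not> absorbing g r (fst ((mapM g r ^^ n) x)) (cdot g ((mapM g r ^^ n) x))"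
    by blast
  have "V \<longlonglongrightarrow> 0"
  proof (rule contracting_tendsto_zero[OF r])
    fix n
    show "0 \<le> V n" by (simp add: V_def lyapunov_nonneg)
    show "V (Suc n) \<le> V n"
      using decseqD[OF lyapunov_orbit_decseq[OF r g out], of n "Suc n"] by (simp add: V_def)
  next
    fix N
    obtain n where "N \<le> n" "lyap_contracting g r ((mapM g r ^^ n) x)"
      using outside_orbit_frequently_contracting[OF r g out] by blast
    then show "\<exists>n\<ge>N. V (Suc n) \<le> r * V n"
      using lyapunov_mapM_contracts[OF r g _ out] by (auto simp: V_def)
  qed
  moreover have "0 < lyap_threshold g" using g by (simp add: lyap_threshold_def)
  ultimately have "eventually (\<lambda>n. V n < lyap_threshold g) sequentially"
    by (rule order_tendstoD(2))
  then obtain n where "V n < lyap_threshold g" unfolding eventually_sequentially by blast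
  then show False using absorbing_if_lyapunov_small[OF r g] out unfolding V_def by blast
qed

theorem theorem1:
  fixes \<gamma> \<rho> :: real
  assumes "\<gamma> \<ge> 1" and "0 \<le> \<rho>" and "\<rho> < 1"
  shows "mapM \<gamma> \<rho> 0 = 0 \<and>
         (\<forall>x0 :: real \<times> real. (\<lambda>n. norm ((mapM \<gamma> \<rho> ^^ n) x0)) \<longlonglongrightarrow> 0)"
proof
  show "mapM \<gamma> \<rho> 0 = 0" by (simp add: mapM_def mapT_def linA_def zero_prod_def)
  show "\<forall>x0 :: real \<times> real. (\<lambda>n. norm ((mapM \<gamma> \<rho> ^^ n) x0)) \<longlonglongrightarrow> 0"
  proof
    fix x0 :: "real \<times> real"
    obtain N where "absorbing \<gamma> \<rho> (fst ((mapM \<gamma> \<rho> ^^ N) x0)) (cdot \<gamma> ((mapM \<gamma> \<rho> ^^ N) x0))"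
      using reaches_absorbing[OF assms(2,3,1)] by blast
    then show "(\<lambda>n. norm ((mapM \<gamma> \<rho> ^^ n) x0)) \<longlonglongrightarrow> 0"
      by (rule orbit_tendsto_from_iterate[OF absorbing_tendsto_zero[OF assms(2,3,1)]])
  qed
qed

end
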